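(* Let $G$ be a graph and let $xTy$ be a path-thread of $G$ with $x\ne y$. Let $T'$ be the path obtained from $T$ by deleting $x$ and $y$, and suppose $v(T')=3m+2$ for some integer $m\ge1$. Let $G'$ be obtained from $G-V(T')$ by adding a new vertex $z$ and the two new edges $xz$ and $yz$. Then $\lambda(G')\ge v(G')/4$ implies $\lambda(G)\ge v(G)/4$.
   Context: All graphs are finite and simple. $v(G)$ is the number of vertices. $\lambda(G)$ denotes the maximum number of pairwise vertex-disjoint subgraphs of $G$ each of which is a path with exactly two edges. A path-thread of $G$ is a path $P$ in $G$, maximal under inclusion among paths, such that every internal vertex of $P$ has degree $2$ in $G$; its end-vertices are $x,y$, written $xPy$. *)

theory Defs
  imports Complex_Main
begin

definition graph :: "'a set \<Rightarrow> 'a set set \<Rightarrow> bool" where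
  "graph V E \<longleftrightarrow> finite V \<and> (\<forall>e\<in>E. \<exists>a b. a \<noteq> b \<and> a \<in> V \<and> b \<in> V \<and> e = {a, b})"

definition degree :: "'a set set \<Rightarrow> 'a \<Rightarrow> nat" where
  "degree E v = card {e \<in> E. v \<in> e}"

definition is_path :: "'a set \<Rightarrow> 'a set set \<Rightarrow> 'a list \<Rightarrow> bool" where
  "is_path V E xs \<longleftrightarrow> xs \<noteq> [] \<and> distinct xs \<and> set xs \<subseteq> V \<and>
     (\<forall>i. Suc i < length xs \<longrightarrow> {xs ! i, xs ! Suc i} \<in> E)"

definition path_edges :: "'a list \<Rightarrow> 'a set set" where
  "path_edges xs = {{xs ! i, xs ! Suc i} | i. Suc i < length xs}"

definition internal_deg2 :: "'a set set \<Rightarrow> 'a list \<Rightarrow> bool" where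
  "internal_deg2 E xs \<longleftrightarrow> (\<forall>i. 0 < i \<and> Suc i < length xs \<longrightarrow> degree E (xs ! i) = 2)"

definition path_sub :: "'a list \<Rightarrow> 'a list \<Rightarrow> bool" where
  "path_sub xs ys \<longleftrightarrow> set xs \<subseteq> set ys \<and> path_edges xs \<subseteq> path_edges ys"

definition path_thread :: "'a set \<Rightarrow> 'a set set \<Rightarrow> 'a list \<Rightarrow> bool" where
  "path_thread V E xs \<longleftrightarrow> is_path V E xs \<and> internal_deg2 E xs \<and>
     \<not> (\<exists>ys. is_path V E ys \<and> internal_deg2 E ys \<and> path_sub xs ys \<and> \<not> path_sub ys xs)"

text \<open>lambda(G): maximum number of pairwise vertex-disjoint subgraphs that are paths with
  exactly two edges (a path [a,b,c]).\<close>

definition P3_packing :: "'a set \<Rightarrow> 'a set set \<Rightarrow> 'a list set \<Rightarrow> bool" where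
  "P3_packing V E P \<longleftrightarrow> (\<forall>p\<in>P. length p = 3 \<and> is_path V E p) \<and>
     pairwise (\<lambda>p q. set p \<inter> set q = {}) P"

definition lambda_P3 :: "'a set \<Rightarrow> 'a set set \<Rightarrow> nat" where
  "lambda_P3 V E = Max {card P | P. P3_packing V E P}"

end

theory Submission
  imports Defs
begin

text \<open>Write \<open>T = x T' y\<close>. Take a maximum packing of \<open>G'\<close>. Its members avoiding \<open>z\<close> are
  two-edge paths of \<open>G - V(T')\<close>; if one member uses \<open>z\<close>, it also uses \<open>x\<close> or \<open>y\<close>, the only
  neighbours of \<open>z\<close>, and we discard it in exchange for \<open>m + 1\<close> disjoint two-edge paths cut from
  \<open>xT'\<close> or \<open>T'y\<close> (both have \<open>3m + 3\<close> vertices); otherwise we add \<open>m\<close> disjoint two-edge paths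
  cut from \<open>T'\<close>. Either way \<open>\<lambda>(G) \<ge> \<lambda>(G') + m\<close>, while \<open>v(G) = v(G') + 3m + 1\<close>, so
  \<open>\<lambda>(G) \<ge> (v(G) + m - 1)/4\<close>.\<close>

lemma hd_butlast_tl_last:
  "xs \<noteq> [] \<Longrightarrow> hd xs \<noteq> last xs \<Longrightarrow> xs = hd xs # butlast (tl xs) @ [last xs]"
  by (cases xs) auto

lemma graph_edge_subset: "graph V E \<Longrightarrow> e \<in> E \<Longrightarrow> e \<subseteq> V"
  unfolding graph_def by auto

lemma is_path_single [simp]: "is_path V E [a] \<longleftrightarrow> a \<in> V"
  by (simp add: is_path_def)

lemma is_path_Cons_Cons:
  "is_path V E (a # b # xs) \<longleftrightarrow>
     a \<in> V \<and> {a, b} \<in> E \<and> a \<notin> set (b # xs) \<and> is_path V E (b # xs)"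
proof
  assume "is_path V E (a # b # xs)"
  then have edges: "\<And>i. Suc i < length (a # b # xs) \<Longrightarrow>
      {(a # b # xs) ! i, (a # b # xs) ! Suc i} \<in> E"
    and "distinct (a # b # xs)" "set (a # b # xs) \<subseteq> V"
    unfolding is_path_def by blast+
  moreover have "{(b # xs) ! i, (b # xs) ! Suc i} \<in> E" if "Suc i < length (b # xs)" for i
    using edges[of "Suc i"] that by simp
  ultimately show "a \<in> V \<and> {a, b} \<in> E \<and> a \<notin> set (b # xs) \<and> is_path V E (b # xs)"
    using edges[of 0] unfolding is_path_def by simp
next
  assume a: "a \<in> V \<and> {a, b} \<in> E \<and> a \<notin> set (b # xs) \<and> is_path V E (b # xs)"
  then have edges: "\<And>i. Suc i < length (b # xs) \<Longrightarrow> {(b # xs) ! i, (b # xs) ! Suc i} \<in> E"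
    unfolding is_path_def by blast
  have "{(a # b # xs) ! i, (a # b # xs) ! Suc i} \<in> E" if "Suc i < length (a # b # xs)" for i
    using a edges[of "i - 1"] that by (cases i) auto
  moreover have "distinct (a # b # xs)" "set (a # b # xs) \<subseteq> V"
    using a unfolding is_path_def by auto
  ultimately show "is_path V E (a # b # xs)"
    unfolding is_path_def by blast
qed

lemma is_path_append:
  assumes "xs \<noteq> []" "ys \<noteq> []"
  shows "is_path V E (xs @ ys) \<longleftrightarrow>
    is_path V E xs \<and> is_path V E ys \<and> set xs \<inter> set ys = {} \<and> {last xs, hd ys} \<in> E"
  using assms
proof (induction xs rule: list_nonempty_induct)
  case (single a)
  then show ?case
    by (cases ys) (auto simp: is_path_Cons_Cons)
next
  case (cons a xs)
  then obtain b xs' where "xs = b # xs'"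
    by (cases xs) auto
  with cons show ?case
    by (auto simp: is_path_Cons_Cons)
qed

lemma is_path_appendD1: "is_path V E (xs @ ys) \<Longrightarrow> xs \<noteq> [] \<Longrightarrow> is_path V E xs"
  by (cases "ys = []") (simp_all add: is_path_append)

lemma is_path_appendD2: "is_path V E (xs @ ys) \<Longrightarrow> ys \<noteq> [] \<Longrightarrow> is_path V E ys"
  by (cases "xs = []") (simp_all add: is_path_append)

lemma P3_packing_empty [simp]: "P3_packing V E {}"
  by (simp add: P3_packing_def)

lemma P3_packing_Un:
  assumes "P3_packing V E P" "P3_packing V E Q"
    and "\<And>p q. p \<in> P \<Longrightarrow> q \<in> Q \<Longrightarrow> set p \<inter> set q = {}"
  shows "P3_packing V E (P \<union> Q)"
  using assms unfolding P3_packing_def pairwise_def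
  by (metis Int_commute Un_iff)

lemma P3_packing_in_path:
  assumes "is_path V E L" "3 * k \<le> length L"
  shows "\<exists>Q. P3_packing V E Q \<and> finite Q \<and> card Q = k \<and> (\<forall>q\<in>Q. set q \<subseteq> set L)"
  using assms
proof (induction k arbitrary: L)
  case 0
  show ?case
    by (intro exI[of _ "{}"]) simp
next
  case (Suc k)
  from Suc.prems(2) obtain a b c R where L: "L = [a, b, c] @ R"
    by (auto simp: Suc_le_length_iff eval_nat_numeral)
  have path: "is_path V E ([a, b, c] @ R)"
    using Suc.prems(1) unfolding L .
  show ?case
  proof (cases "R = []")
    case True
    with Suc.prems(2) L have "k = 0"
      by simp
    with path True show ?thesis
      by (intro exI[of _ "{[a, b, c]}"]) (simp add: P3_packing_def L)
  next
    case False
    with path have abc: "is_path V E [a, b, c]" and "is_path V E R"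
      and disj: "set [a, b, c] \<inter> set R = {}"
      using is_path_append[of "[a, b, c]" R] by blast+
    moreover have "3 * k \<le> length R"
      using Suc.prems(2) L by simp
    ultimately obtain Q where Q: "P3_packing V E Q" "finite Q" "card Q = k" "\<forall>q\<in>Q. set q \<subseteq> set R"
      using Suc.IH by blast
    have "P3_packing V E ({[a, b, c]} \<union> Q)"
      using abc disj Q(1,4) by (intro P3_packing_Un) (auto simp: P3_packing_def)
    moreover have "[a, b, c] \<notin> Q"
      using Q(4) disj by auto
    ultimately show ?thesis
      using Q L by (intro exI[of _ "insert [a, b, c] Q"]) auto
  qed
qed

lemma P3_packing_subset: "P3_packing V E P \<Longrightarrow> Q \<subseteq> P \<Longrightarrow> P3_packing V E Q"
  unfolding P3_packing_def by (meson pairwise_subset subset_iff)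

lemma P3_packing_extend_by_path:
  assumes "P3_packing V E P" "finite P" "is_path V E L" "3 * k \<le> length L"
    and "\<And>p. p \<in> P \<Longrightarrow> set p \<inter> set L = {}"
  shows "\<exists>Q. P3_packing V E Q \<and> card Q = card P + k"
proof -
  obtain Q where Q: "P3_packing V E Q" "finite Q" "card Q = k" "\<forall>q\<in>Q. set q \<subseteq> set L"
    using P3_packing_in_path[OF assms(3,4)] by blast
  have disj: "set p \<inter> set q = {}" if "p \<in> P" "q \<in> Q" for p q
    using assms(5) Q(4) that by blast
  have "P \<inter> Q = {}"
  proof (intro equals0I)
    fix q assume "q \<in> P \<inter> Q"
    moreover from this have "length q = 3"
      using Q(1) unfolding P3_packing_def by blast
    ultimately show False
      using disj by fastforce
  qed
  then have "card (P \<union> Q) = card P + k"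
    using assms(2) Q(2,3) by (simp add: card_Un_disjoint)
  then show ?thesis
    using P3_packing_Un[OF assms(1) Q(1) disj] by blast
qed

lemma P3_packing_subset_lists: "P3_packing V E P \<Longrightarrow> P \<subseteq> {p. set p \<subseteq> V \<and> length p = 3}"
  unfolding P3_packing_def is_path_def by auto

lemma finite_P3_packing: "finite V \<Longrightarrow> P3_packing V E P \<Longrightarrow> finite P"
  by (rule finite_subset[OF P3_packing_subset_lists finite_lists_length_eq])

lemma card_P3_packing_le:
  "finite V \<Longrightarrow> P3_packing V E P \<Longrightarrow> card P \<le> card {p. set p \<subseteq> V \<and> length p = 3}"
  by (intro card_mono finite_lists_length_eq P3_packing_subset_lists)

lemma finite_card_P3_packings: "finite V \<Longrightarrow> finite {card P | P. P3_packing V E P}"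
  by (rule finite_subset[of _ "{..card {p. set p \<subseteq> V \<and> length p = 3}}"])
    (auto dest: card_P3_packing_le)

lemma card_le_lambda_P3: "finite V \<Longrightarrow> P3_packing V E P \<Longrightarrow> card P \<le> lambda_P3 V E"
  unfolding lambda_P3_def by (rule Max_ge[OF finite_card_P3_packings]) blast+

lemma lambda_P3_attained:
  assumes "finite V"
  shows "\<exists>P. P3_packing V E P \<and> card P = lambda_P3 V E"
proof -
  have "lambda_P3 V E \<in> {card P | P. P3_packing V E P}"
    unfolding lambda_P3_def
    by (rule Max_in[OF finite_card_P3_packings[OF assms]]) (use P3_packing_empty in blast)
  then show ?thesis
    by auto
qed

text \<open>The graph \<open>G'\<close> of the theorem, for \<open>S = V(T')\<close>.\<close>

definition reduced_verts :: "'a set \<Rightarrow> 'a set \<Rightarrow> 'a \<Rightarrow> 'a set" where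
  "reduced_verts V S z = (V - S) \<union> {z}"

definition reduced_edges :: "'a set set \<Rightarrow> 'a set \<Rightarrow> 'a \<Rightarrow> 'a \<Rightarrow> 'a \<Rightarrow> 'a set set" where
  "reduced_edges E S x y z = {e \<in> E. e \<inter> S = {}} \<union> {{x, z}, {y, z}}"

lemma card_reduced_verts:
  assumes "finite V" "S \<subseteq> V" "z \<notin> V"
  shows "card (reduced_verts V S z) + card S = card V + 1"
proof -
  have "card (reduced_verts V S z) = Suc (card (V - S))"
    using assms by (simp add: reduced_verts_def)
  moreover have "card (V - S) + card S = card V"
    using assms by (metis card_Diff_subset card_mono finite_subset le_add_diff_inverse2)
  ultimately show ?thesis
    by simp
qed

lemma is_path_reduced_avoiding_new_vertex:
  assumes "is_path (reduced_verts V S z) (reduced_edges E S x y z) p" "z \<notin> set p"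
  shows "is_path V E p \<and> set p \<inter> S = {}"
proof -
  have "{p ! i, p ! Suc i} \<in> E" if i: "Suc i < length p" for i
  proof -
    have "{p ! i, p ! Suc i} \<in> reduced_edges E S x y z"
      using assms(1) i unfolding is_path_def by blast
    moreover have "p ! i \<noteq> z" "p ! Suc i \<noteq> z"
      using assms(2) i by (auto simp: set_conv_nth)
    ultimately show ?thesis
      by (auto simp: reduced_edges_def doubleton_eq_iff)
  qed
  moreover have "set p \<subseteq> V - S"
    using assms unfolding is_path_def reduced_verts_def by auto
  ultimately show ?thesis
    using assms(1) unfolding is_path_def by auto
qed

lemma P3_packing_reduced_avoiding_new_vertex:
  assumes "P3_packing (reduced_verts V S z) (reduced_edges E S x y z) P" "\<forall>p\<in>P. z \<notin> set p"
  shows "P3_packing V E P" "\<forall>p\<in>P. set p \<inter> S = {}"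
proof -
  have "is_path V E p \<and> set p \<inter> S = {}" if "p \<in> P" for p
  proof (rule is_path_reduced_avoiding_new_vertex)
    show "is_path (reduced_verts V S z) (reduced_edges E S x y z) p" "z \<notin> set p"
      using assms that unfolding P3_packing_def by auto
  qed
  with assms(1) show "P3_packing V E P" "\<forall>p\<in>P. set p \<inter> S = {}"
    unfolding P3_packing_def by auto
qed

lemma reduced_edges_at_new_vertex:
  assumes "graph V E" "z \<notin> V" "{u, z} \<in> reduced_edges E S x y z" "u \<noteq> z"
  shows "u = x \<or> u = y"
proof -
  have "{u, z} \<notin> E"
    using assms(2) graph_edge_subset[OF assms(1)] by blast
  then have "{u, z} = {x, z} \<or> {u, z} = {y, z}"
    using assms(3) by (simp add: reduced_edges_def)
  then show ?thesis
    using assms(4) by (metis doubleton_eq_iff)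
qed

lemma is_path_reduced_through_new_vertex:
  assumes "graph V E" "z \<notin> V" "is_path (reduced_verts V S z) (reduced_edges E S x y z) p"
    and "2 \<le> length p" "z \<in> set p"
  shows "x \<in> set p \<or> y \<in> set p"
proof -
  let ?E' = "reduced_edges E S x y z"
  have edge: "{p ! k, p ! Suc k} \<in> ?E'" if "Suc k < length p" for k
    using assms(3) that unfolding is_path_def by blast
  obtain i where i: "i < length p" "p ! i = z"
    using assms(5) by (auto simp: in_set_conv_nth)
  obtain j where j: "j < length p" "j \<noteq> i" "{p ! j, z} \<in> ?E'"
  proof (cases "Suc i < length p")
    case True
    then show ?thesis
      using that[of "Suc i"] edge[of i] i(2) by (simp add: insert_commute)
  next
    case False
    then obtain k where "i = Suc k"
      using assms(4) i(1) by (cases i) auto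
    then show ?thesis
      using that[of k] edge[of k] i by simp
  qed
  have "distinct p"
    using assms(3) by (simp add: is_path_def)
  with i j have "p ! j \<noteq> z"
    by (metis nth_eq_iff_index_eq)
  with j show ?thesis
    using reduced_edges_at_new_vertex[OF assms(1,2)] nth_mem[OF j(1)] by metis
qed

lemma P3_packing_reduced_remove_new_vertex:
  assumes "P3_packing (reduced_verts V S z) (reduced_edges E S x y z) P" "p0 \<in> P" "z \<in> set p0"
  shows "P3_packing V E (P - {p0})" "\<forall>p \<in> P - {p0}. set p \<inter> (set p0 \<union> S) = {}"
proof -
  have disj_p0: "\<forall>p \<in> P - {p0}. set p \<inter> set p0 = {}"
    using assms(1,2) unfolding P3_packing_def pairwise_def by blast
  then have "\<forall>p \<in> P - {p0}. z \<notin> set p"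
    using assms(3) by blast
  then have "P3_packing V E (P - {p0})" "\<forall>p \<in> P - {p0}. set p \<inter> S = {}"
    using P3_packing_reduced_avoiding_new_vertex[OF P3_packing_subset[OF assms(1) Diff_subset]]
    by simp_all
  with disj_p0 show "P3_packing V E (P - {p0})" "\<forall>p \<in> P - {p0}. set p \<inter> (set p0 \<union> S) = {}"
    by auto
qed

lemma P3_packing_reduced_lift:
  assumes "graph V E" "z \<notin> V" "is_path V E (x # ts @ [y])" "3 * m + 2 \<le> length ts"
    and "P3_packing (reduced_verts V (set ts) z) (reduced_edges E (set ts) x y z) P" "finite P"
  shows "\<exists>Q. P3_packing V E Q \<and> card Q = card P + m"
proof -
  have "ts \<noteq> []"
    using assms(4) by auto
  have xts: "is_path V E (x # ts)"
    using is_path_appendD1[of V E "x # ts" "[y]"] assms(3) by simp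
  have tsy: "is_path V E (ts @ [y])"
    using is_path_appendD2[of V E "[x]" "ts @ [y]"] assms(3) by simp
  show ?thesis
  proof (cases "\<exists>p0\<in>P. z \<in> set p0")
    case False
    then have "P3_packing V E P" "\<forall>p\<in>P. set p \<inter> set ts = {}"
      using P3_packing_reduced_avoiding_new_vertex[OF assms(5)] by blast+
    moreover have "is_path V E ts"
      using is_path_appendD1[OF tsy \<open>ts \<noteq> []\<close>] .
    ultimately show ?thesis
      using P3_packing_extend_by_path[of V E P ts m] assms(4,6) by simp
  next
    case True
    then obtain p0 where p0: "p0 \<in> P" "z \<in> set p0"
      by blast
    note rest = P3_packing_reduced_remove_new_vertex[OF assms(5) p0]
    have "length p0 = 3" "is_path (reduced_verts V (set ts) z) (reduced_edges E (set ts) x y z) p0"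
      using assms(5) p0(1) unfolding P3_packing_def by simp_all
    then have "x \<in> set p0 \<or> y \<in> set p0"
      using is_path_reduced_through_new_vertex[OF assms(1,2)] p0(2) by simp
    then obtain L where L: "is_path V E L" "3 * (m + 1) \<le> length L" "set L \<subseteq> set p0 \<union> set ts"
    proof (elim disjE)
      assume "x \<in> set p0"
      then show ?thesis
        using that[of "x # ts"] xts assms(4) by simp
    next
      assume "y \<in> set p0"
      then show ?thesis
        using that[of "ts @ [y]"] tsy assms(4) by simp
    qed
    have "\<And>p. p \<in> P - {p0} \<Longrightarrow> set p \<inter> set L = {}"
      using rest(2) L(3) by blast
    then obtain Q where "P3_packing V E Q" "card Q = card (P - {p0}) + (m + 1)"
      using P3_packing_extend_by_path[OF rest(1) _ L(1,2)] assms(6) by blast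
    moreover have "card (P - {p0}) + 1 = card P"
      using card_Suc_Diff1[OF assms(6) p0(1)] by simp
    ultimately show ?thesis
      by auto
  qed
qed

lemma lambda_P3_reduced_add_le:
  assumes "graph V E" "z \<notin> V" "is_path V E (x # ts @ [y])" "3 * m + 2 \<le> length ts"
  shows "lambda_P3 (reduced_verts V (set ts) z) (reduced_edges E (set ts) x y z) + m \<le> lambda_P3 V E"
proof -
  let ?V' = "reduced_verts V (set ts) z" and ?E' = "reduced_edges E (set ts) x y z"
  have "finite V" "finite ?V'"
    using assms(1) by (simp_all add: graph_def reduced_verts_def)
  then obtain P where P: "P3_packing ?V' ?E' P" "card P = lambda_P3 ?V' ?E'"
    using lambda_P3_attained by blast
  then obtain Q where "P3_packing V E Q" "card Q = card P + m"
    using P3_packing_reduced_lift[OF assms] finite_P3_packing[OF \<open>finite ?V'\<close>] by blast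
  then show ?thesis
    using card_le_lambda_P3[OF \<open>finite V\<close>] P(2) by metis
qed

theorem lemma3p2:
  fixes V :: "'a set" and E :: "'a set set" and T :: "'a list" and z :: 'a and m :: nat
  assumes "graph V E"
    and "path_thread V E T"
    and "hd T \<noteq> last T"
    and "card (set (butlast (tl T))) = 3 * m + 2"
    and "m \<ge> 1"
    and "z \<notin> V"
  defines "V' \<equiv> (V - set (butlast (tl T))) \<union> {z}"
    and "E' \<equiv> {e \<in> E. e \<inter> set (butlast (tl T)) = {}} \<union> {{hd T, z}, {last T, z}}"
  assumes "real (lambda_P3 V' E') \<ge> real (card V') / 4"
  shows "real (lambda_P3 V E) \<ge> real (card V) / 4"
proof -
  let ?ts = "butlast (tl T)"
  have "finite V"
    using assms(1) by (simp add: graph_def)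
  have path: "is_path V E T"
    using assms(2) by (simp add: path_thread_def)
  then have T: "T = hd T # ?ts @ [last T]"
    using assms(3) by (intro hd_butlast_tl_last) (auto simp: is_path_def)
  have "distinct ?ts"
    using path by (simp add: is_path_def distinct_butlast distinct_tl)
  then have length_ts: "length ?ts = 3 * m + 2"
    using assms(4) by (simp add: distinct_card)
  have "set ?ts \<subseteq> set T"
    by (subst (2) T) auto
  then have "set ?ts \<subseteq> V"
    using path by (auto simp: is_path_def)
  have "is_path V E (hd T # ?ts @ [last T])"
    using path T by simp
  then have "lambda_P3 V' E' + m \<le> lambda_P3 V E"
    using lambda_P3_reduced_add_le[OF assms(1,6), of "hd T" ?ts "last T" m] length_ts
    unfolding V'_def E'_def reduced_verts_def reduced_edges_def by simp
  moreover have "card V' + (3 * m + 2) = card V + 1"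
    using card_reduced_verts[OF \<open>finite V\<close> \<open>set ?ts \<subseteq> V\<close> assms(6)] assms(4)
    unfolding V'_def reduced_verts_def by simp
  ultimately show ?thesis
    using assms(5,9) by linarith
qed

end
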